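(* Let $d\ge 3$. There exist constants $C>1$ and $c\in(0,1)$ depending only on $d$ such that the following holds for every finite field $\mathbb F_q$ of characteristic greater than two. For $j\in\mathbb F_q$ let $S_j=\{x\in\mathbb F_q^d: x_1^2+\cdots+x_d^2=j\}$. Let $i,j\in\mathbb F_q^*$, $E\subset S_i$ and $F\subset S_j$. If $|E||F|\ge Cq^d$, then $|\mathcal D(E,F)|\ge c\,q$.
   Context: $\mathbb F_q$ is a finite field with $q$ elements and characteristic greater than two; $\mathbb F_q^*=\mathbb F_q\setminus\{0\}$. For $\alpha\in\mathbb F_q^d$, $\|\alpha\|=\alpha_1^2+\cdots+\alpha_d^2\in\mathbb F_q$, and for $E,F\subset\mathbb F_q^d$ the distance set is $\mathcal D(E,F)=\{\|x-y\|: x\in E,\ y\in F\}\subset\mathbb F_q$. *)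

theory Defs
  imports "HOL-Algebra.Algebra" "HOL-Library.FuncSet"
begin

definition fring_char :: "('a, 'b) ring_scheme \<Rightarrow> nat" where
  "fring_char R = (if \<exists>n::nat>0. add_pow R n \<one>\<^bsub>R\<^esub> = \<zero>\<^bsub>R\<^esub>
                  then (LEAST n::nat. n > 0 \<and> add_pow R n \<one>\<^bsub>R\<^esub> = \<zero>\<^bsub>R\<^esub>) else 0)"

definition vecs :: "('a, 'b) ring_scheme \<Rightarrow> nat \<Rightarrow> (nat \<Rightarrow> 'a) set" where
  "vecs R d = PiE {..<d} (\<lambda>_. carrier R)"

definition qnorm :: "('a, 'b) ring_scheme \<Rightarrow> nat \<Rightarrow> (nat \<Rightarrow> 'a) \<Rightarrow> 'a" where
  "qnorm R d x = finsum R (\<lambda>k. x k \<otimes>\<^bsub>R\<^esub> x k) {..<d}"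

definition sphere_ff :: "('a, 'b) ring_scheme \<Rightarrow> nat \<Rightarrow> 'a \<Rightarrow> (nat \<Rightarrow> 'a) set" where
  "sphere_ff R d j = {x \<in> vecs R d. qnorm R d x = j}"

definition dist_set :: "('a, 'b) ring_scheme \<Rightarrow> nat \<Rightarrow> (nat \<Rightarrow> 'a) set \<Rightarrow> (nat \<Rightarrow> 'a) set \<Rightarrow> 'a set" where
  "dist_set R d E F = {qnorm R d (\<lambda>k. x k \<ominus>\<^bsub>R\<^esub> y k) | x y. x \<in> E \<and> y \<in> F}"

end

theory Submission
  imports Defs "HOL-Analysis.Convex"
begin

text \<open>
  Let \<open>\<nu>(t)\<close> be the number of pairs \<open>(x, y) \<in> E \<times> F\<close> with \<open>\<parallel>x - y\<parallel> = t\<close>.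
  By Cauchy--Schwarz, \<open>(|E||F|)\<^sup>2 \<le> |\<D>(E,F)| \<Sum>\<^sub>t \<nu>(t)\<^sup>2\<close>, so it suffices to
  bound the energy \<open>\<Sum>\<^sub>t \<nu>(t)\<^sup>2\<close> by \<open>2(|E||F|)\<^sup>2/q\<close>.
  Since all points of \<open>F\<close> have the same norm and \<open>2 \<noteq> 0\<close>, \<open>\<parallel>x - y\<parallel> = \<parallel>x - y'\<parallel>\<close>
  iff \<open>x\<cdot>y = x\<cdot>y'\<close>; hence the energy of the distances from a fixed \<open>x\<close> is the
  number \<open>K(x)\<close> of pairs in \<open>F\<^sup>2\<close> that the linear form \<open>x\<cdot>_\<close> does not separate,
  which is at least \<open>|F|\<^sup>2/q\<close>. After removing the common mean, the energy is controlled
  by the sum of the excess \<open>K(x) - |F|\<^sup>2/q\<close> over \<open>E\<close>.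
  The excess is invariant under scaling \<open>x\<close>, and the nonzero multiples of points of the
  sphere \<open>S\<^sub>i\<close> (\<open>i \<noteq> 0\<close>) cover every nonzero vector at most twice, so the average over
  \<open>E\<close> is bounded by the average over all nonzero vectors, where a hyperplane count gives
  \<open>|F| q\<^sup>d\<close> for the sum. Altogether \<open>|\<D>(E,F)| \<ge> q/2\<close> as soon as \<open>|E||F| \<ge> 4 q\<^sup>d\<close>,
  for every \<open>d \<ge> 1\<close>.
\<close>

section \<open>Double counting and Cauchy--Schwarz\<close>

lemma card_eq_sum_card_fibres:
  assumes "finite A" "finite T" "g ` A \<subseteq> T"
  shows "card A = (\<Sum>t\<in>T. card {a \<in> A. g a = t})"
  using sum.group[OF assms, of "\<lambda>_. 1::nat"] by simp

lemma card_pairs_same_image: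
  assumes "finite A" "finite T" "g ` A \<subseteq> T"
  shows "card {p \<in> A \<times> A. g (fst p) = g (snd p)} = (\<Sum>t\<in>T. card {a \<in> A. g a = t} ^ 2)"
proof -
  have "{p \<in> A \<times> A. g (fst p) = g (snd p)} = (\<Union>t\<in>T. {a \<in> A. g a = t} \<times> {a \<in> A. g a = t})"
    using assms(3) by auto
  also have "card \<dots> = (\<Sum>t\<in>T. card ({a \<in> A. g a = t} \<times> {a \<in> A. g a = t}))"
    by (rule card_UN_disjoint) (use assms in auto)
  finally show ?thesis
    by (simp add: card_cartesian_product power2_eq_square)
qed

lemma sum_card_filter_swap:
  assumes "finite A" "finite B"
  shows "(\<Sum>a\<in>A. card {b \<in> B. P a b}) = (\<Sum>b\<in>B. card {a \<in> A. P a b})"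
proof -
  have "card {b \<in> B. P a b} = (\<Sum>b\<in>B. if P a b then 1 else 0)" for a
    unfolding card_eq_sum using assms(2) by (rule sum.inter_filter)
  moreover have "card {a \<in> A. P a b} = (\<Sum>a\<in>A. if P a b then 1 else 0)" for b
    unfolding card_eq_sum using assms(1) by (rule sum.inter_filter)
  ultimately show ?thesis
    by (simp only:) (rule sum.swap)
qed

lemma sum_comp_le_fibre_bound_mult_sum:
  fixes \<phi> :: "'b \<Rightarrow> real"
  assumes "finite A" "finite B" "h ` A \<subseteq> B"
    and fibre: "\<And>b. b \<in> B \<Longrightarrow> card {a \<in> A. h a = b} \<le> k"
    and nonneg: "\<And>b. b \<in> B \<Longrightarrow> 0 \<le> \<phi> b"
  shows "(\<Sum>a\<in>A. \<phi> (h a)) \<le> k * (\<Sum>b\<in>B. \<phi> b)"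
proof -
  have "(\<Sum>a\<in>A. \<phi> (h a)) = (\<Sum>b\<in>B. \<Sum>a\<in>{a \<in> A. h a = b}. \<phi> (h a))"
    by (rule sum.group[OF assms(1-3), symmetric])
  also have "\<dots> = (\<Sum>b\<in>B. card {a \<in> A. h a = b} * \<phi> b)"
    by (rule sum.cong) auto
  also have "\<dots> \<le> (\<Sum>b\<in>B. k * \<phi> b)"
    using fibre nonneg by (intro sum_mono mult_right_mono) auto
  finally show ?thesis
    by (simp add: sum_distrib_left)
qed

text \<open>Subtract the common row mean \<open>f / |T|\<close>, then apply Cauchy--Schwarz to the centred columns.\<close>

lemma sum_square_column_sums_le:
  fixes a :: "'x \<Rightarrow> 't \<Rightarrow> real" and f :: real
  assumes "card T > 0"
    and rows: "\<And>x. x \<in> A \<Longrightarrow> (\<Sum>t\<in>T. a x t) = f"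
  shows "(\<Sum>t\<in>T. (\<Sum>x\<in>A. a x t) ^ 2)
           \<le> (real (card A) * f) ^ 2 / card T + card A * (\<Sum>x\<in>A. (\<Sum>t\<in>T. (a x t) ^ 2) - f ^ 2 / card T)"
proof -
  define q where "q = real (card T)"
  define m where "m = f / q"
  define M where "M = real (card A)"
  define b where "b x t = a x t - m" for x t
  have q: "q > 0"
    using assms(1) by (simp add: q_def)
  have b_rows: "(\<Sum>t\<in>T. b x t) = 0" if "x \<in> A" for x
    using rows[OF that] q by (simp add: b_def m_def sum_subtractf q_def)
  have b_squares: "(\<Sum>t\<in>T. (b x t) ^ 2) = (\<Sum>t\<in>T. (a x t) ^ 2) - f ^ 2 / q" if "x \<in> A" for x
  proof -
    have "(\<Sum>t\<in>T. (b x t) ^ 2) = (\<Sum>t\<in>T. (a x t) ^ 2 - 2 * m * a x t + m ^ 2)"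
      unfolding b_def by (rule sum.cong) (auto simp: power2_eq_square algebra_simps)
    also have "\<dots> = (\<Sum>t\<in>T. (a x t) ^ 2) - 2 * m * f + q * m ^ 2"
      using rows[OF that] by (simp add: sum.distrib sum_subtractf q_def flip: sum_distrib_left)
    finally show ?thesis
      using q by (simp add: m_def power2_eq_square field_simps)
  qed
  have "(\<Sum>t\<in>T. (\<Sum>x\<in>A. a x t) ^ 2) = (\<Sum>t\<in>T. (M * m) ^ 2 + 2 * (M * m) * (\<Sum>x\<in>A. b x t) + (\<Sum>x\<in>A. b x t) ^ 2)"
    by (rule sum.cong) (simp_all add: b_def M_def sum_subtractf power2_eq_square algebra_simps)
  also have "\<dots> = q * (M * m) ^ 2 + 2 * (M * m) * (\<Sum>x\<in>A. \<Sum>t\<in>T. b x t) + (\<Sum>t\<in>T. (\<Sum>x\<in>A. b x t) ^ 2)"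
    by (simp add: q_def sum.distrib sum.swap[of _ T A] flip: sum_distrib_left)
  also have "(\<Sum>x\<in>A. \<Sum>t\<in>T. b x t) = 0"
    using b_rows by simp
  also have "(\<Sum>t\<in>T. (\<Sum>x\<in>A. b x t) ^ 2) \<le> (\<Sum>t\<in>T. M * (\<Sum>x\<in>A. (b x t) ^ 2))"
    by (intro sum_mono) (metis M_def mult.commute sum_squared_le_sum_of_squares)
  also have "\<dots> = M * (\<Sum>x\<in>A. \<Sum>t\<in>T. (b x t) ^ 2)"
    by (subst sum.swap) (simp add: sum_distrib_left)
  also have "\<dots> = M * (\<Sum>x\<in>A. (\<Sum>t\<in>T. (a x t) ^ 2) - f ^ 2 / q)"
    using b_squares by simp
  finally show ?thesis
    using q by (simp add: m_def M_def q_def power2_eq_square field_simps)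
qed

section \<open>Vectors over a commutative ring\<close>

definition dotp :: "('a, 'b) ring_scheme \<Rightarrow> nat \<Rightarrow> (nat \<Rightarrow> 'a) \<Rightarrow> (nat \<Rightarrow> 'a) \<Rightarrow> 'a" where
  "dotp R d x y = finsum R (\<lambda>k. x k \<otimes>\<^bsub>R\<^esub> y k) {..<d}"

definition smultv :: "('a, 'b) ring_scheme \<Rightarrow> nat \<Rightarrow> 'a \<Rightarrow> (nat \<Rightarrow> 'a) \<Rightarrow> nat \<Rightarrow> 'a" where
  "smultv R d s x = (\<lambda>k\<in>{..<d}. s \<otimes>\<^bsub>R\<^esub> x k)"

definition zero_vec :: "('a, 'b) ring_scheme \<Rightarrow> nat \<Rightarrow> nat \<Rightarrow> 'a" where
  "zero_vec R d = (\<lambda>k\<in>{..<d}. \<zero>\<^bsub>R\<^esub>)"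

definition dist_count :: "('a, 'b) ring_scheme \<Rightarrow> nat \<Rightarrow> (nat \<Rightarrow> 'a) set \<Rightarrow> (nat \<Rightarrow> 'a) \<Rightarrow> 'a \<Rightarrow> nat" where
  "dist_count R d F x t = card {y \<in> F. qnorm R d (\<lambda>k. x k \<ominus>\<^bsub>R\<^esub> y k) = t}"

definition dot_collisions :: "('a, 'b) ring_scheme \<Rightarrow> nat \<Rightarrow> (nat \<Rightarrow> 'a) set \<Rightarrow> (nat \<Rightarrow> 'a) \<Rightarrow> nat" where
  "dot_collisions R d F x = card {p \<in> F \<times> F. dotp R d x (fst p) = dotp R d x (snd p)}"

lemma vecsD: "x \<in> vecs R d \<Longrightarrow> k < d \<Longrightarrow> x k \<in> carrier R"
  by (auto simp: vecs_def)

lemma vecs_eqI: "x \<in> vecs R d \<Longrightarrow> y \<in> vecs R d \<Longrightarrow> (\<And>k. k < d \<Longrightarrow> x k = y k) \<Longrightarrow> x = y"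
  unfolding vecs_def by (rule PiE_ext) auto

lemma finite_vecs: "finite (carrier R) \<Longrightarrow> finite (vecs R d)"
  by (simp add: vecs_def finite_PiE)

lemma card_vecs: "finite (carrier R) \<Longrightarrow> card (vecs R d) = card (carrier R) ^ d"
  by (simp add: vecs_def card_PiE)

lemma zero_vec_vecs: "\<zero>\<^bsub>R\<^esub> \<in> carrier R \<Longrightarrow> zero_vec R d \<in> vecs R d"
  by (simp add: zero_vec_def vecs_def)

context cring
begin

lemma dotp_closed: "x \<in> vecs R d \<Longrightarrow> y \<in> vecs R d \<Longrightarrow> dotp R d x y \<in> carrier R"
  unfolding dotp_def by (intro finsum_closed) (auto simp: vecsD)

lemma qnorm_closed: "(\<And>k. k < d \<Longrightarrow> z k \<in> carrier R) \<Longrightarrow> qnorm R d z \<in> carrier R"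
  unfolding qnorm_def by (intro finsum_closed) auto

lemma qnorm_diff_closed: "x \<in> vecs R d \<Longrightarrow> y \<in> vecs R d \<Longrightarrow> qnorm R d (\<lambda>k. x k \<ominus> y k) \<in> carrier R"
  by (intro qnorm_closed) (auto simp: vecsD)

lemma qnorm_diff:
  assumes x: "x \<in> vecs R d" and y: "y \<in> vecs R d"
  shows "qnorm R d (\<lambda>k. x k \<ominus> y k) \<oplus> (dotp R d x y \<oplus> dotp R d x y) = qnorm R d x \<oplus> qnorm R d y"
proof -
  have "qnorm R d (\<lambda>k. x k \<ominus> y k) \<oplus> (dotp R d x y \<oplus> dotp R d x y)
     = (\<Oplus>k\<in>{..<d}. (x k \<ominus> y k) \<otimes> (x k \<ominus> y k) \<oplus> (x k \<otimes> y k \<oplus> x k \<otimes> y k))"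
    unfolding qnorm_def dotp_def using x y by (simp add: finsum_addf vecsD Pi_def)
  also have "\<dots> = (\<Oplus>k\<in>{..<d}. x k \<otimes> x k \<oplus> y k \<otimes> y k)"
  proof (rule finsum_cong')
    fix k assume "k \<in> {..<d}"
    then have "x k \<in> carrier R" "y k \<in> carrier R"
      using x y by (auto simp: vecsD)
    then show "(x k \<ominus> y k) \<otimes> (x k \<ominus> y k) \<oplus> (x k \<otimes> y k \<oplus> x k \<otimes> y k) = x k \<otimes> x k \<oplus> y k \<otimes> y k"
      by algebra
  qed (use x y in \<open>auto simp: vecsD\<close>)
  also have "\<dots> = qnorm R d x \<oplus> qnorm R d y"
    unfolding qnorm_def using x y by (simp add: finsum_addf vecsD Pi_def)
  finally show ?thesis .
qed

lemma smultv_vecs: "s \<in> carrier R \<Longrightarrow> x \<in> vecs R d \<Longrightarrow> smultv R d s x \<in> vecs R d"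
  by (auto simp: smultv_def vecs_def)

lemma dotp_smultv:
  assumes s: "s \<in> carrier R" and x: "x \<in> vecs R d" and y: "y \<in> vecs R d"
  shows "dotp R d (smultv R d s x) y = s \<otimes> dotp R d x y"
proof -
  have "dotp R d (smultv R d s x) y = (\<Oplus>k\<in>{..<d}. s \<otimes> (x k \<otimes> y k))"
    unfolding dotp_def smultv_def
    by (rule finsum_cong') (use s x y in \<open>auto simp: vecsD m_assoc\<close>)
  also have "\<dots> = s \<otimes> dotp R d x y"
    unfolding dotp_def using s x y by (subst finsum_rdistr) (auto simp: vecsD)
  finally show ?thesis .
qed

lemma qnorm_smultv:
  assumes s: "s \<in> carrier R" and x: "x \<in> vecs R d"
  shows "qnorm R d (smultv R d s x) = (s \<otimes> s) \<otimes> qnorm R d x"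
proof -
  have "qnorm R d (smultv R d s x) = (\<Oplus>k\<in>{..<d}. (s \<otimes> s) \<otimes> (x k \<otimes> x k))"
    unfolding qnorm_def smultv_def
  proof (rule finsum_cong')
    fix k assume k: "k \<in> {..<d}"
    then have "x k \<in> carrier R"
      using x by (auto simp: vecsD)
    then show "(\<lambda>k\<in>{..<d}. s \<otimes> x k) k \<otimes> (\<lambda>k\<in>{..<d}. s \<otimes> x k) k = (s \<otimes> s) \<otimes> (x k \<otimes> x k)"
      using s k by simp algebra
  qed (use s x in \<open>auto simp: vecsD\<close>)
  also have "\<dots> = (s \<otimes> s) \<otimes> qnorm R d x"
    unfolding qnorm_def using s x by (subst finsum_rdistr) (auto simp: vecsD)
  finally show ?thesis .
qed

lemma dotp_zero_vec: "y \<in> vecs R d \<Longrightarrow> dotp R d (zero_vec R d) y = \<zero>"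
  unfolding dotp_def zero_vec_def by (subst finsum_cong'[of _ _ "\<lambda>_. \<zero>"]) (auto simp: vecsD)

lemma qnorm_zero_vec: "qnorm R d (zero_vec R d) = \<zero>"
  unfolding qnorm_def zero_vec_def by (subst finsum_cong'[of _ _ "\<lambda>_. \<zero>"]) auto

lemma dotp_split:
  assumes x: "x \<in> vecs R d" and y: "y \<in> vecs R d" and k: "k < d"
  shows "dotp R d x y = x k \<otimes> y k \<oplus> (\<Oplus>l\<in>{..<d} - {k}. x l \<otimes> y l)"
proof -
  have "{..<d} = insert k ({..<d} - {k})"
    using k by auto
  then have "dotp R d x y = (\<Oplus>l\<in>insert k ({..<d} - {k}). x l \<otimes> y l)"
    unfolding dotp_def by simp
  also have "\<dots> = x k \<otimes> y k \<oplus> (\<Oplus>l\<in>{..<d} - {k}. x l \<otimes> y l)"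
    by (rule finsum_insert) (use x y k in \<open>auto simp: vecsD\<close>)
  finally show ?thesis .
qed

lemma diff_mult_diff_eq_zero:
  assumes "a \<in> carrier R" "b \<in> carrier R" "c \<in> carrier R" "e \<in> carrier R" "u \<in> carrier R" "v \<in> carrier R"
    and "a \<otimes> c \<oplus> u = a \<otimes> e \<oplus> v" "b \<otimes> c \<oplus> u = b \<otimes> e \<oplus> v"
  shows "(a \<ominus> b) \<otimes> (c \<ominus> e) = \<zero>"
proof -
  have "(a \<ominus> b) \<otimes> (c \<ominus> e) = ((a \<otimes> c \<oplus> u) \<ominus> (a \<otimes> e \<oplus> v)) \<ominus> ((b \<otimes> c \<oplus> u) \<ominus> (b \<otimes> e \<oplus> v))"
    using assms(1-6) by algebra
  also have "\<dots> = ((a \<otimes> e \<oplus> v) \<ominus> (a \<otimes> e \<oplus> v)) \<ominus> ((b \<otimes> e \<oplus> v) \<ominus> (b \<otimes> e \<oplus> v))"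
    using assms(7,8) by simp
  also have "\<dots> = \<zero>"
    using assms(1-6) by algebra
  finally show ?thesis .
qed

lemma card_square_le_dot_collisions:
  assumes fin: "finite (carrier R)" and x: "x \<in> vecs R d" and F: "F \<subseteq> vecs R d"
  shows "real (card F) ^ 2 \<le> real (card (carrier R)) * real (dot_collisions R d F x)"
proof -
  have fF: "finite F"
    using fin F finite_vecs finite_subset by blast
  have im: "dotp R d x ` F \<subseteq> carrier R"
    using x F by (auto intro: dotp_closed)
  let ?c = "\<lambda>t. real (card {y \<in> F. dotp R d x y = t})"
  have "real (card F) ^ 2 = (\<Sum>t\<in>carrier R. ?c t) ^ 2"
    using card_eq_sum_card_fibres[OF fF fin im] by (simp flip: of_nat_sum)
  also have "\<dots> \<le> (\<Sum>t\<in>carrier R. (?c t) ^ 2) * real (card (carrier R))"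
    by (rule sum_squared_le_sum_of_squares)
  also have "(\<Sum>t\<in>carrier R. (?c t) ^ 2) = real (dot_collisions R d F x)"
    using card_pairs_same_image[OF fF fin im] by (simp add: dot_collisions_def)
  finally show ?thesis
    by (simp add: mult.commute)
qed

lemma sum_dist_count:
  assumes fin: "finite (carrier R)" and x: "x \<in> vecs R d" and F: "F \<subseteq> vecs R d"
  shows "(\<Sum>t\<in>carrier R. dist_count R d F x t) = card F"
proof -
  have "(\<lambda>y. qnorm R d (\<lambda>k. x k \<ominus> y k)) ` F \<subseteq> carrier R"
    using x F by (auto intro: qnorm_diff_closed)
  from card_eq_sum_card_fibres[OF finite_subset[OF F finite_vecs[OF fin]] fin this]
  show ?thesis
    by (simp add: dist_count_def)
qed

lemma card_product_square_le:
  assumes fin: "finite (carrier R)" and E: "E \<subseteq> vecs R d" and F: "F \<subseteq> vecs R d"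
  shows "(real (card E) * real (card F)) ^ 2
           \<le> real (card (dist_set R d E F)) * (\<Sum>t\<in>carrier R. (\<Sum>x\<in>E. real (dist_count R d F x t)) ^ 2)"
proof -
  define \<nu> where "\<nu> t = (\<Sum>x\<in>E. real (dist_count R d F x t))" for t
  define D where "D = dist_set R d E F"
  have DT: "D \<subseteq> carrier R"
    using E F by (auto simp: D_def dist_set_def subset_iff intro!: qnorm_diff_closed)
  have vanish: "\<nu> t = 0" if "t \<notin> D" for t
  proof -
    have "dist_count R d F x t = 0" if "x \<in> E" for x
    proof -
      have "{y \<in> F. qnorm R d (\<lambda>k. x k \<ominus> y k) = t} = {}"
        using \<open>t \<notin> D\<close> that by (auto simp: D_def dist_set_def)
      then show ?thesis
        by (simp only: dist_count_def card.empty)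
    qed
    then show ?thesis
      by (simp add: \<nu>_def)
  qed
  have "(\<Sum>t\<in>carrier R. \<nu> t) = (\<Sum>x\<in>E. real (\<Sum>t\<in>carrier R. dist_count R d F x t))"
    unfolding \<nu>_def by (subst sum.swap) simp
  also have "\<dots> = real (card E) * real (card F)"
    using E sum_dist_count[OF fin _ F] by (auto simp: subset_iff)
  finally have "(\<Sum>t\<in>D. \<nu> t) = real (card E) * real (card F)"
    using sum.mono_neutral_left[OF fin DT, of \<nu>] vanish by simp
  then have "(real (card E) * real (card F)) ^ 2 \<le> (\<Sum>t\<in>D. (\<nu> t) ^ 2) * real (card D)"
    using sum_squared_le_sum_of_squares[of \<nu> D] by simp
  also have "\<dots> \<le> (\<Sum>t\<in>carrier R. (\<nu> t) ^ 2) * real (card D)"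
    using DT fin by (intro mult_right_mono sum_mono2) auto
  finally show ?thesis
    by (simp add: \<nu>_def D_def mult.commute)
qed

end

lemma (in ring) two_neq_zero_if_fring_char_gt_2:
  assumes "fring_char R > 2"
  shows "\<one> \<oplus> \<one> \<noteq> \<zero>"
proof
  assume "\<one> \<oplus> \<one> = \<zero>"
  then have two: "add_pow R (2::nat) \<one> = \<zero>"
    by (simp add: add_pow_def numeral_2_eq_2)
  then have "(LEAST n::nat. n > 0 \<and> add_pow R n \<one> = \<zero>) \<le> 2"
    by (intro Least_le) simp
  then show False
    using assms two unfolding fring_char_def by (auto split: if_splits)
qed

section \<open>Distances, dot products and hyperplanes\<close>

context domain
begin

lemma card_carrier_ge_2: "finite (carrier R) \<Longrightarrow> card (carrier R) \<ge> 2"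
  using card_mono[of "carrier R" "{\<zero>, \<one>}"] by simp

lemma qnorm_diff_eq_iff_dotp_eq:
  assumes two: "\<one> \<oplus> \<one> \<noteq> \<zero>" and x: "x \<in> vecs R d" and y: "y \<in> vecs R d" and y': "y' \<in> vecs R d"
    and norm: "qnorm R d y = qnorm R d y'"
  shows "qnorm R d (\<lambda>k. x k \<ominus> y k) = qnorm R d (\<lambda>k. x k \<ominus> y' k) \<longleftrightarrow> dotp R d x y = dotp R d x y'"
proof -
  define a b u v where "a = qnorm R d (\<lambda>k. x k \<ominus> y k)" and "b = qnorm R d (\<lambda>k. x k \<ominus> y' k)"
    and "u = dotp R d x y" and "v = dotp R d x y'"
  have carrier: "a \<in> carrier R" "b \<in> carrier R" "u \<in> carrier R" "v \<in> carrier R"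
    using x y y' by (simp_all add: a_def b_def u_def v_def qnorm_diff_closed dotp_closed)
  have sums: "a \<oplus> (u \<oplus> u) = b \<oplus> (v \<oplus> v)"
    using qnorm_diff[OF x y] qnorm_diff[OF x y'] norm by (simp add: a_def b_def u_def v_def)
  have "a = b \<longleftrightarrow> u \<oplus> u = v \<oplus> v"
  proof
    assume "u \<oplus> u = v \<oplus> v"
    have "a = (a \<oplus> (u \<oplus> u)) \<ominus> (u \<oplus> u)"
      using carrier by algebra
    also have "\<dots> = (b \<oplus> (v \<oplus> v)) \<ominus> (v \<oplus> v)"
      using sums \<open>u \<oplus> u = v \<oplus> v\<close> by simp
    also have "\<dots> = b"
      using carrier by algebra
    finally show "a = b" .
  qed (use sums carrier in simp)
  also have "\<dots> \<longleftrightarrow> (\<one> \<oplus> \<one>) \<otimes> u = (\<one> \<oplus> \<one>) \<otimes> v"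
    using carrier by (simp add: l_distr)
  also have "\<dots> \<longleftrightarrow> u = v"
    using two carrier by (intro m_lcancel) auto
  finally show ?thesis
    by (simp add: a_def b_def u_def v_def)
qed

lemma sum_square_dist_count:
  assumes fin: "finite (carrier R)" and two: "\<one> \<oplus> \<one> \<noteq> \<zero>"
    and x: "x \<in> vecs R d" and F: "F \<subseteq> sphere_ff R d j"
  shows "(\<Sum>t\<in>carrier R. dist_count R d F x t ^ 2) = dot_collisions R d F x"
proof -
  have FV: "F \<subseteq> vecs R d"
    using F by (auto simp: sphere_ff_def)
  have im: "(\<lambda>y. qnorm R d (\<lambda>k. x k \<ominus> y k)) ` F \<subseteq> carrier R"
    using x FV by (auto simp: qnorm_diff_closed)
  have "qnorm R d (\<lambda>k. x k \<ominus> y k) = qnorm R d (\<lambda>k. x k \<ominus> y' k) \<longleftrightarrow> dotp R d x y = dotp R d x y'"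
    if "y \<in> F" "y' \<in> F" for y y'
    using that F by (intro qnorm_diff_eq_iff_dotp_eq[OF two x]) (auto simp: sphere_ff_def)
  then have "{p \<in> F \<times> F. qnorm R d (\<lambda>k. x k \<ominus> fst p k) = qnorm R d (\<lambda>k. x k \<ominus> snd p k)}
           = {p \<in> F \<times> F. dotp R d x (fst p) = dotp R d x (snd p)}"
    by auto
  then show ?thesis
    using card_pairs_same_image[OF finite_subset[OF FV finite_vecs[OF fin]] fin im]
    by (simp add: dist_count_def dot_collisions_def)
qed

lemma hyperplane_point_eqI:
  assumes x: "x \<in> vecs R d" and x': "x' \<in> vecs R d" and y: "y \<in> vecs R d" and y': "y' \<in> vecs R d"
    and k: "k < d" "y k \<noteq> y' k"
    and off: "\<And>l. l < d \<Longrightarrow> l \<noteq> k \<Longrightarrow> x l = x' l"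
    and eq: "dotp R d x y = dotp R d x y'" and eq': "dotp R d x' y = dotp R d x' y'"
  shows "x = x'"
proof -
  define u v where "u = (\<Oplus>l\<in>{..<d} - {k}. x l \<otimes> y l)" and "v = (\<Oplus>l\<in>{..<d} - {k}. x l \<otimes> y' l)"
  have "(\<Oplus>l\<in>{..<d} - {k}. x' l \<otimes> y l) = u"
    unfolding u_def by (rule finsum_cong') (use off x y in \<open>auto simp: vecsD\<close>)
  moreover have "(\<Oplus>l\<in>{..<d} - {k}. x' l \<otimes> y' l) = v"
    unfolding v_def by (rule finsum_cong') (use off x y' in \<open>auto simp: vecsD\<close>)
  ultimately have "x k \<otimes> y k \<oplus> u = x k \<otimes> y' k \<oplus> v" "x' k \<otimes> y k \<oplus> u = x' k \<otimes> y' k \<oplus> v"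
    using eq eq' k(1) dotp_split[OF x] dotp_split[OF x'] y y' by (simp_all add: u_def v_def)
  moreover have "x k \<in> carrier R" "x' k \<in> carrier R" "y k \<in> carrier R" "y' k \<in> carrier R"
    "u \<in> carrier R" "v \<in> carrier R"
    using x x' y y' k(1) by (auto simp: u_def v_def vecsD intro!: finsum_closed)
  ultimately have "(x k \<ominus> x' k) \<otimes> (y k \<ominus> y' k) = \<zero>"
    by (intro diff_mult_diff_eq_zero)
  then have "x k = x' k"
    using k(2) \<open>x k \<in> carrier R\<close> \<open>x' k \<in> carrier R\<close> \<open>y k \<in> carrier R\<close> \<open>y' k \<in> carrier R\<close>
    by (simp add: integral_iff)
  then show ?thesis
    using off by (intro vecs_eqI[OF x x']) metis
qed

lemma card_dotp_eq_le:
  assumes fin: "finite (carrier R)" and y: "y \<in> vecs R d" and y': "y' \<in> vecs R d" and "y \<noteq> y'"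
  shows "card {x \<in> vecs R d. dotp R d x y = dotp R d x y'} \<le> card (carrier R) ^ (d - 1)"
proof -
  obtain k where k: "k < d" "y k \<noteq> y' k"
    using vecs_eqI[OF y y'] \<open>y \<noteq> y'\<close> by blast
  let ?H = "{x \<in> vecs R d. dotp R d x y = dotp R d x y'}"
  have "inj_on (\<lambda>x. restrict x ({..<d} - {k})) ?H"
  proof (rule inj_onI)
    fix x x' assume H: "x \<in> ?H" "x' \<in> ?H"
      and r: "restrict x ({..<d} - {k}) = restrict x' ({..<d} - {k})"
    have "x l = x' l" if "l < d" "l \<noteq> k" for l
      using fun_cong[OF r, of l] that by simp
    then show "x = x'"
      using H by (intro hyperplane_point_eqI[OF _ _ y y' k]) auto
  qed
  then have "card ?H = card ((\<lambda>x. restrict x ({..<d} - {k})) ` ?H)"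
    by (simp add: card_image)
  also have "\<dots> \<le> card (\<Pi>\<^sub>E l\<in>{..<d} - {k}. carrier R)"
    using fin by (intro card_mono image_subsetI) (auto simp: finite_PiE restrict_PiE_iff Pi_iff vecsD)
  also have "\<dots> = card (carrier R) ^ (d - 1)"
    using k by (simp add: card_PiE)
  finally show ?thesis .
qed

lemma square_eq_square_cases:
  assumes s: "s \<in> carrier R" and t: "t \<in> carrier R" and sq: "s \<otimes> s = t \<otimes> t"
  shows "s = t \<or> s = \<ominus> t"
proof -
  have "(s \<ominus> t) \<otimes> (s \<oplus> t) = s \<otimes> s \<ominus> t \<otimes> t"
    using s t by algebra
  also have "\<dots> = \<zero>"
    using sq s t by simp
  finally have "s \<ominus> t = \<zero> \<or> s \<oplus> t = \<zero>"
    using s t by (simp add: integral_iff)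
  moreover have "s = \<ominus> t" if "s \<oplus> t = \<zero>"
  proof -
    have "s = (s \<oplus> t) \<ominus> t"
      using s t by algebra
    then show ?thesis
      using that t by (simp add: minus_eq)
  qed
  ultimately show ?thesis
    using s t by auto
qed

lemma dot_collisions_smultv:
  assumes s: "s \<in> carrier R" "s \<noteq> \<zero>" and x: "x \<in> vecs R d" and F: "F \<subseteq> vecs R d"
  shows "dot_collisions R d F (smultv R d s x) = dot_collisions R d F x"
proof -
  have "dotp R d (smultv R d s x) y = dotp R d (smultv R d s x) y' \<longleftrightarrow> dotp R d x y = dotp R d x y'"
    if "y \<in> F" "y' \<in> F" for y y'
    using that F s x by (simp add: subset_iff dotp_smultv m_lcancel dotp_closed)
  then show ?thesis
    unfolding dot_collisions_def by (intro arg_cong[where f = card] Collect_cong) auto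
qed

lemma dot_collisions_zero_vec:
  assumes "F \<subseteq> vecs R d"
  shows "dot_collisions R d F (zero_vec R d) = card F ^ 2"
proof -
  have "{p \<in> F \<times> F. dotp R d (zero_vec R d) (fst p) = dotp R d (zero_vec R d) (snd p)} = F \<times> F"
    using assms by (auto simp: subset_iff dotp_zero_vec)
  then show ?thesis
    by (simp add: dot_collisions_def card_cartesian_product power2_eq_square)
qed

lemma sum_dot_collisions_le:
  assumes fin: "finite (carrier R)" and F: "F \<subseteq> vecs R d"
  shows "(\<Sum>x\<in>vecs R d. dot_collisions R d F x)
           \<le> card F ^ 2 * card (carrier R) ^ (d - 1) + card F * card (carrier R) ^ d"
proof -
  let ?q = "card (carrier R)"
  have fV: "finite (vecs R d)" and fF: "finite F"
    using fin F finite_vecs finite_subset by blast+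
  have "(\<Sum>x\<in>vecs R d. dot_collisions R d F x)
      = (\<Sum>p\<in>F \<times> F. card {x \<in> vecs R d. dotp R d x (fst p) = dotp R d x (snd p)})"
    unfolding dot_collisions_def using fV fF
    by (intro sum_card_filter_swap[where P = "\<lambda>x p. dotp R d x (fst p) = dotp R d x (snd p)"]) auto
  also have "\<dots> \<le> (\<Sum>p\<in>F \<times> F. ?q ^ (d - 1) + (if fst p = snd p then ?q ^ d else 0))"
  proof (rule sum_mono)
    fix p assume p: "p \<in> F \<times> F"
    show "card {x \<in> vecs R d. dotp R d x (fst p) = dotp R d x (snd p)}
            \<le> ?q ^ (d - 1) + (if fst p = snd p then ?q ^ d else 0)"
    proof (cases "fst p = snd p")
      case True
      then show ?thesis
        using card_mono[OF fV, of "{x \<in> vecs R d. _}"] card_vecs[OF fin] by simp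
    next
      case False
      have "fst p \<in> vecs R d" "snd p \<in> vecs R d"
        using p F by auto
      from card_dotp_eq_le[OF fin this False] show ?thesis
        by simp
    qed
  qed
  also have "\<dots> = card (F \<times> F) * ?q ^ (d - 1) + ?q ^ d * card {p \<in> F \<times> F. fst p = snd p}"
    using fF by (simp add: sum.distrib sum.inter_filter[symmetric])
  also have "card {p \<in> F \<times> F. fst p = snd p} = card F"
    by (rule bij_betw_same_card[of fst]) (auto simp: bij_betw_def inj_on_def image_def)
  finally show ?thesis
    by (simp add: card_cartesian_product power2_eq_square mult.commute)
qed

lemma sum_dot_collisions_excess_le:
  assumes fin: "finite (carrier R)" and d: "d \<ge> 1" and F: "F \<subseteq> vecs R d"
  shows "(\<Sum>z\<in>vecs R d - {zero_vec R d}.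
            real (dot_collisions R d F z) - real (card F) ^ 2 / real (card (carrier R)))
           \<le> real (card F) * real (card (carrier R)) ^ d"
proof -
  define q n where "q = real (card (carrier R))" and "n = real (card F)"
  have q: "q \<ge> 2"
    using card_carrier_ge_2[OF fin] by (simp add: q_def)
  have power: "q ^ d = q * q ^ (d - 1)"
    using d by (cases d) auto
  have "real (\<Sum>z\<in>vecs R d. dot_collisions R d F z)
          \<le> real (card F ^ 2 * card (carrier R) ^ (d - 1) + card F * card (carrier R) ^ d)"
    by (rule of_nat_mono) (rule sum_dot_collisions_le[OF fin F])
  then have total: "(\<Sum>z\<in>vecs R d. real (dot_collisions R d F z)) \<le> n ^ 2 * q ^ (d - 1) + n * q ^ d"
    by (simp add: q_def n_def)
  have "q ^ d * (n ^ 2 / q) = n ^ 2 * q ^ (d - 1)"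
    using power q by simp
  moreover have "n ^ 2 / q \<le> n ^ 2"
    using q by (simp add: pos_divide_le_eq mult_le_cancel_left1)
  moreover have "(\<Sum>z\<in>vecs R d - {zero_vec R d}. real (dot_collisions R d F z) - n ^ 2 / q)
      = (\<Sum>z\<in>vecs R d. real (dot_collisions R d F z) - n ^ 2 / q)
          - (real (dot_collisions R d F (zero_vec R d)) - n ^ 2 / q)"
    using fin by (simp add: sum_diff1 finite_vecs zero_vec_vecs)
  moreover have "(\<Sum>z\<in>vecs R d. real (dot_collisions R d F z) - n ^ 2 / q)
      = (\<Sum>z\<in>vecs R d. real (dot_collisions R d F z)) - q ^ d * (n ^ 2 / q)"
    using fin by (simp add: sum_subtractf card_vecs q_def)
  moreover have "real (dot_collisions R d F (zero_vec R d)) = n ^ 2"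
    using F by (simp add: dot_collisions_zero_vec n_def)
  ultimately have "(\<Sum>z\<in>vecs R d - {zero_vec R d}. real (dot_collisions R d F z) - n ^ 2 / q)
      \<le> n * q ^ d"
    using total by linarith
  then show ?thesis
    by (simp add: q_def n_def)
qed

end

section \<open>Scaling points of a sphere\<close>

context field
begin

lemma smultv_inverse:
  assumes s: "s \<in> carrier R" "s \<noteq> \<zero>" and x: "x \<in> vecs R d"
  shows "smultv R d (inv s) (smultv R d s x) = x"
proof -
  have u: "s \<in> Units R"
    using s field_Units by blast
  show ?thesis
  proof (rule vecs_eqI[OF _ x])
    show "smultv R d (inv s) (smultv R d s x) \<in> vecs R d"
      using u s x by (intro smultv_vecs) auto
    fix k assume "k < d"
    with x have xk: "x k \<in> carrier R"
      by (rule vecsD)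
    have "smultv R d (inv s) (smultv R d s x) k = inv s \<otimes> (s \<otimes> x k)"
      using \<open>k < d\<close> by (simp add: smultv_def)
    also have "\<dots> = (inv s \<otimes> s) \<otimes> x k"
      using u xk Units_closed Units_inv_closed by (metis m_assoc)
    also have "\<dots> = x k"
      using u xk by (simp add: Units_l_inv)
    finally show "smultv R d (inv s) (smultv R d s x) k = x k" .
  qed
qed

text \<open>If \<open>z = s x\<close> with \<open>\<parallel>x\<parallel> = i \<noteq> 0\<close>, then \<open>s\<^sup>2 i = \<parallel>z\<parallel>\<close> fixes \<open>s\<close>
  up to sign, and \<open>x = s\<inverse> z\<close>.\<close>

lemma card_smultv_fibre_le_2:
  assumes i: "i \<in> carrier R" "i \<noteq> \<zero>" and E: "E \<subseteq> sphere_ff R d i"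
  shows "card {p \<in> (carrier R - {\<zero>}) \<times> E. smultv R d (fst p) (snd p) = z} \<le> 2"
proof (cases "{p \<in> (carrier R - {\<zero>}) \<times> E. smultv R d (fst p) (snd p) = z} = {}")
  case False
  let ?P = "{p \<in> (carrier R - {\<zero>}) \<times> E. smultv R d (fst p) (snd p) = z}"
  obtain s0 x0 where p0: "(s0, x0) \<in> ?P"
    using False by auto
  have s0: "s0 \<in> carrier R" "s0 \<noteq> \<zero>" and x0: "x0 \<in> vecs R d" "qnorm R d x0 = i"
    using p0 E by (auto simp: sphere_ff_def)
  have z: "qnorm R d z = (s0 \<otimes> s0) \<otimes> i"
    using p0 qnorm_smultv[OF s0(1) x0(1)] x0(2) by auto
  have "?P \<subseteq> (\<lambda>s. (s, smultv R d (inv s) z)) ` {s0, \<ominus> s0}"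
  proof
    fix p assume p: "p \<in> ?P"
    obtain s x where px: "p = (s, x)"
      by (cases p)
    have s: "s \<in> carrier R" "s \<noteq> \<zero>" and x: "x \<in> vecs R d" "qnorm R d x = i"
      and sx: "smultv R d s x = z"
      using p E px by (auto simp: sphere_ff_def)
    have "(s \<otimes> s) \<otimes> i = (s0 \<otimes> s0) \<otimes> i"
      using z sx qnorm_smultv[OF s(1) x(1)] x(2) by simp
    then have "s \<otimes> s = s0 \<otimes> s0"
      using m_rcancel[of i "s \<otimes> s" "s0 \<otimes> s0"] i s s0 by simp
    then have "s = s0 \<or> s = \<ominus> s0"
      using s s0 by (intro square_eq_square_cases)
    moreover have "x = smultv R d (inv s) z"
      using smultv_inverse[OF s x(1)] sx by simp
    ultimately show "p \<in> (\<lambda>s. (s, smultv R d (inv s) z)) ` {s0, \<ominus> s0}"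
      using px by auto
  qed
  then have "card ?P \<le> card ((\<lambda>s. (s, smultv R d (inv s) z)) ` {s0, \<ominus> s0})"
    by (intro card_mono) auto
  also have "\<dots> \<le> card {s0, \<ominus> s0}"
    by (rule card_image_le) simp
  also have "\<dots> \<le> 2"
    by (simp add: card_insert_if)
  finally show ?thesis .
qed (simp only: card.empty)

text \<open>Each point of the sphere is counted \<open>q - 1\<close> times through its nonzero multiples, and each
  nonzero vector is such a multiple at most twice.\<close>

lemma sum_scaling_invariant_on_sphere_le:
  fixes \<phi> :: "(nat \<Rightarrow> 'a) \<Rightarrow> real"
  assumes fin: "finite (carrier R)" and i: "i \<in> carrier R" "i \<noteq> \<zero>" and E: "E \<subseteq> sphere_ff R d i"
    and nonneg: "\<And>z. z \<in> vecs R d \<Longrightarrow> 0 \<le> \<phi> z"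
    and invariant: "\<And>s x. s \<in> carrier R \<Longrightarrow> s \<noteq> \<zero> \<Longrightarrow> x \<in> vecs R d \<Longrightarrow> \<phi> (smultv R d s x) = \<phi> x"
  shows "(real (card (carrier R)) - 1) * (\<Sum>x\<in>E. \<phi> x) \<le> 2 * (\<Sum>z\<in>vecs R d - {zero_vec R d}. \<phi> z)"
proof -
  let ?U = "carrier R - {\<zero>}"
  have EV: "E \<subseteq> vecs R d"
    using E by (auto simp: sphere_ff_def)
  have fE: "finite E"
    using EV fin finite_vecs finite_subset by blast
  have card_U: "real (card ?U) = real (card (carrier R)) - 1"
    using card_carrier_ge_2[OF fin] by (simp add: card_Diff_singleton of_nat_diff)
  have multiple_nonzero: "smultv R d s x \<in> vecs R d - {zero_vec R d}" if "s \<in> ?U" "x \<in> E" for s x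
  proof -
    have x: "x \<in> vecs R d" "qnorm R d x = i"
      using that E by (auto simp: sphere_ff_def)
    have "qnorm R d (smultv R d s x) \<noteq> \<zero>"
      using that i x by (simp add: qnorm_smultv integral_iff)
    then show ?thesis
      using that x by (auto simp: smultv_vecs qnorm_zero_vec)
  qed
  have "(real (card (carrier R)) - 1) * (\<Sum>x\<in>E. \<phi> x) = (\<Sum>x\<in>E. \<Sum>s\<in>?U. \<phi> (smultv R d s x))"
    using EV invariant card_U by (simp add: sum_distrib_left subset_iff)
  also have "\<dots> = (\<Sum>p\<in>?U \<times> E. \<phi> (smultv R d (fst p) (snd p)))"
    by (subst sum.swap) (simp add: sum.cartesian_product case_prod_beta)
  also have "\<dots> \<le> 2 * (\<Sum>z\<in>vecs R d - {zero_vec R d}. \<phi> z)"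
    using fin fE multiple_nonzero card_smultv_fibre_le_2[OF i E] nonneg
    by (intro sum_comp_le_fibre_bound_mult_sum[where k = 2, simplified]) (auto simp: finite_vecs)
  finally show ?thesis .
qed

lemma dist_energy_le:
  assumes fin: "finite (carrier R)" and two: "\<one> \<oplus> \<one> \<noteq> \<zero>" and d: "d \<ge> 1"
    and i: "i \<in> carrier R" "i \<noteq> \<zero>" and E: "E \<subseteq> sphere_ff R d i" and F: "F \<subseteq> sphere_ff R d j"
  shows "(\<Sum>t\<in>carrier R. (\<Sum>x\<in>E. real (dist_count R d F x t)) ^ 2)
           \<le> (real (card E) * real (card F)) ^ 2 / real (card (carrier R))
             + 2 * real (card E) * real (card F) * real (card (carrier R)) ^ d / (real (card (carrier R)) - 1)"
proof -
  define q where "q = real (card (carrier R))"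
  define \<phi> where "\<phi> x = real (dot_collisions R d F x) - real (card F) ^ 2 / q" for x
  have q: "q \<ge> 2"
    using card_carrier_ge_2[OF fin] by (simp add: q_def)
  have EV: "E \<subseteq> vecs R d" and FV: "F \<subseteq> vecs R d"
    using E F by (auto simp: sphere_ff_def)
  have rows: "(\<Sum>t\<in>carrier R. real (dist_count R d F x t)) = real (card F)" if "x \<in> E" for x
    using that EV by (simp add: subset_iff sum_dist_count[OF fin _ FV] flip: of_nat_sum)
  have squares: "(\<Sum>t\<in>carrier R. real (dist_count R d F x t) ^ 2) = real (dot_collisions R d F x)"
    if "x \<in> E" for x
    using that EV by (simp add: subset_iff sum_square_dist_count[OF fin two _ F] flip: of_nat_sum of_nat_power)
  have energy: "(\<Sum>t\<in>carrier R. (\<Sum>x\<in>E. real (dist_count R d F x t)) ^ 2)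
          \<le> (real (card E) * real (card F)) ^ 2 / q + real (card E) * (\<Sum>x\<in>E. \<phi> x)"
    using sum_square_column_sums_le[where A = E and T = "carrier R", OF _ rows] q squares
    by (simp add: q_def \<phi>_def)
  have excess: "(\<Sum>x\<in>E. \<phi> x) \<le> 2 * real (card F) * q ^ d / (q - 1)"
  proof -
    have "(q - 1) * (\<Sum>x\<in>E. \<phi> x) \<le> 2 * (\<Sum>z\<in>vecs R d - {zero_vec R d}. \<phi> z)"
      unfolding q_def
    proof (rule sum_scaling_invariant_on_sphere_le[OF fin i E])
      show "0 \<le> \<phi> z" if "z \<in> vecs R d" for z
        using card_square_le_dot_collisions[OF fin that FV] q by (simp add: \<phi>_def q_def field_simps)
      show "\<phi> (smultv R d s x) = \<phi> x" if "s \<in> carrier R" "s \<noteq> \<zero>" "x \<in> vecs R d" for s x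
        using dot_collisions_smultv[OF that FV] by (simp add: \<phi>_def)
    qed
    also have "(\<Sum>z\<in>vecs R d - {zero_vec R d}. \<phi> z) \<le> real (card F) * q ^ d"
      using sum_dot_collisions_excess_le[OF fin d FV] by (simp add: \<phi>_def q_def)
    finally show ?thesis
      using q by (simp add: pos_le_divide_eq mult.commute mult.left_commute)
  qed
  have "real (card E) * (\<Sum>x\<in>E. \<phi> x) \<le> real (card E) * (2 * real (card F) * q ^ d / (q - 1))"
    using excess by (rule mult_left_mono) simp
  also have "\<dots> = 2 * real (card E) * real (card F) * q ^ d / (q - 1)"
    by (simp add: ac_simps)
  finally show ?thesis
    using energy by (simp add: q_def)
qed

lemma card_dist_set_ge:
  assumes fin: "finite (carrier R)" and char: "fring_char R > 2" and d: "d \<ge> 1"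
    and i: "i \<in> carrier R" "i \<noteq> \<zero>" and E: "E \<subseteq> sphere_ff R d i" and F: "F \<subseteq> sphere_ff R d j"
    and large: "4 * real (card (carrier R)) ^ d \<le> real (card E) * real (card F)"
  shows "real (card (carrier R)) / 2 \<le> real (card (dist_set R d E F))"
proof -
  define q N S D where "q = real (card (carrier R))" and "N = real (card E) * real (card F)"
    and "S = (\<Sum>t\<in>carrier R. (\<Sum>x\<in>E. real (dist_count R d F x t)) ^ 2)"
    and "D = real (card (dist_set R d E F))"
  have q: "q \<ge> 2"
    using card_carrier_ge_2[OF fin] by (simp add: q_def)
  have "0 < q ^ d"
    using q by simp
  then have N: "N > 0"
    using large unfolding q_def N_def by linarith
  have "E \<subseteq> vecs R d" "F \<subseteq> vecs R d"
    using E F by (auto simp: sphere_ff_def)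
  then have "N ^ 2 \<le> D * S"
    unfolding N_def D_def S_def by (rule card_product_square_le[OF fin])
  also have "S \<le> N ^ 2 / q + 2 * N * q ^ d / (q - 1)"
    using dist_energy_le[OF fin two_neq_zero_if_fring_char_gt_2[OF char] d i E F]
    by (simp add: S_def N_def q_def mult.assoc)
  also have "2 * N * q ^ d / (q - 1) \<le> N ^ 2 / q"
  proof -
    have "N * (2 * q ^ d) \<le> N * (N / 2)"
      using large N by (intro mult_left_mono) (simp_all add: q_def N_def)
    then have "2 * N * q ^ d \<le> N * (N / 2)"
      by (simp add: ac_simps)
    then have "2 * N * q ^ d * q \<le> N * (N / 2) * q"
      by (rule mult_right_mono) (use q in simp)
    also have "\<dots> \<le> N ^ 2 * (q - 1)"
      using N q by (simp add: power2_eq_square)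
    finally show ?thesis
      using q by (simp add: field_simps)
  qed
  finally have "N ^ 2 \<le> D * (2 * N ^ 2 / q)"
    by (simp add: mult_left_mono D_def)
  then have "q \<le> 2 * D"
    using N q by (simp add: field_simps power2_eq_square)
  then show ?thesis
    by (simp add: q_def D_def)
qed

end

theorem theorem3p3:
  fixes d :: nat
  assumes "d \<ge> 3"
  shows "\<exists>C c :: real. C > 1 \<and> 0 < c \<and> c < 1 \<and>
    (\<forall>(R :: nat ring) i j E F.
       field R \<longrightarrow> finite (carrier R) \<longrightarrow> fring_char R > 2 \<longrightarrow>
       i \<in> carrier R - {\<zero>\<^bsub>R\<^esub>} \<longrightarrow> j \<in> carrier R - {\<zero>\<^bsub>R\<^esub>} \<longrightarrow>
       E \<subseteq> sphere_ff R d i \<longrightarrow> F \<subseteq> sphere_ff R d j \<longrightarrow>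
       real (card E) * real (card F) \<ge> C * real (card (carrier R)) ^ d \<longrightarrow>
       real (card (dist_set R d E F)) \<ge> c * real (card (carrier R)))"
proof -
  have "real (card (carrier R)) / 2 \<le> real (card (dist_set R d E F))"
    if "field R" "finite (carrier R)" "fring_char R > 2" "i \<in> carrier R - {\<zero>\<^bsub>R\<^esub>}"
      "E \<subseteq> sphere_ff R d i" "F \<subseteq> sphere_ff R d j"
      "4 * real (card (carrier R)) ^ d \<le> real (card E) * real (card F)"
    for R :: "nat ring" and i j E F
    by (rule field.card_dist_set_ge[OF that(1-3)]) (use assms that(4-7) in auto)
  then show ?thesis
    by (intro exI[of _ 4] exI[of _ "1/2"]) auto
qed

end
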